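(* For all graphs $G$ and $H$: (i) $\max\{\gamma^{SLD}(G),\gamma^{SLD}(H)\}\le\gamma^{SLD}(G\,\square\, H)\le\min\{|V(H)|\,\gamma^{SLD}(G),\ |V(G)|\,\gamma^{SLD}(H)\}$; (ii) $\max\{\gamma^{DLD}(G),\gamma^{DLD}(H)\}\le\gamma^{DLD}(G\,\square\, H)\le\min\{|V(H)|\,\gamma^{DLD}(G),\ |V(G)|\,\gamma^{DLD}(H)\}$.
   Context: All graphs are finite, simple and undirected (not necessarily connected). For a vertex $u$, $N(u)$ is its set of neighbours and $N[u]=N(u)\cup\{u\}$. A code is a non-empty subset $C$ of the vertex set $V$; $I(C;u)=N[u]\cap C$. A code $C$ is self-locating-dominating if for every $u\in V\setminus C$ we have $I(C;u)\neq\emptyset$ and $\bigcap_{c\in I(C;u)}N[c]=\{u\}$. A code $C$ is solid-locating-dominating if $I(C;u)\ne\emptyset$ for every $u\in V\setminus C$ and $I(C;u)\not\subseteq I(C;v)$ for all distinct $u,v\in V\setminus C$. $\gamma^{SLD}$ and $\gamma^{DLD}$ denote the minimum sizes of such codes. The Cartesian product $G\square H$ has vertex set $V(G)\times V(H)$, with $(u,v)$ adjacent to $(u',v')$ iff either $u=u'$ and $vv'\in E(H)$, or $uu'\in E(G)$ and $v=v'$. *)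

theory Defs
  imports Main
begin

definition fin_graph :: "'a set \<Rightarrow> ('a \<Rightarrow> 'a \<Rightarrow> bool) \<Rightarrow> bool" where
  "fin_graph V E \<longleftrightarrow> finite V \<and> V \<noteq> {} \<and>
     (\<forall>u v. E u v \<longrightarrow> u \<in> V \<and> v \<in> V) \<and>
     (\<forall>u v. E u v \<longrightarrow> E v u) \<and> (\<forall>u. \<not> E u u)"

definition cnbhd :: "'a set \<Rightarrow> ('a \<Rightarrow> 'a \<Rightarrow> bool) \<Rightarrow> 'a \<Rightarrow> 'a set" where
  "cnbhd V E u = insert u {v \<in> V. E u v}"

definition Ic :: "'a set \<Rightarrow> ('a \<Rightarrow> 'a \<Rightarrow> bool) \<Rightarrow> 'a set \<Rightarrow> 'a \<Rightarrow> 'a set" where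
  "Ic V E C u = cnbhd V E u \<inter> C"

definition self_ld :: "'a set \<Rightarrow> ('a \<Rightarrow> 'a \<Rightarrow> bool) \<Rightarrow> 'a set \<Rightarrow> bool" where
  "self_ld V E C \<longleftrightarrow> C \<subseteq> V \<and> C \<noteq> {} \<and>
     (\<forall>u \<in> V - C. Ic V E C u \<noteq> {} \<and> (\<Inter>c \<in> Ic V E C u. cnbhd V E c) = {u})"

definition solid_ld :: "'a set \<Rightarrow> ('a \<Rightarrow> 'a \<Rightarrow> bool) \<Rightarrow> 'a set \<Rightarrow> bool" where
  "solid_ld V E C \<longleftrightarrow> C \<subseteq> V \<and> C \<noteq> {} \<and>
     (\<forall>u \<in> V - C. Ic V E C u \<noteq> {}) \<and>
     (\<forall>u \<in> V - C. \<forall>v \<in> V - C. u \<noteq> v \<longrightarrow> \<not> Ic V E C u \<subseteq> Ic V E C v)"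

definition gamma_SLD :: "'a set \<Rightarrow> ('a \<Rightarrow> 'a \<Rightarrow> bool) \<Rightarrow> nat" where
  "gamma_SLD V E = Min (card ` {C. self_ld V E C})"

definition gamma_DLD :: "'a set \<Rightarrow> ('a \<Rightarrow> 'a \<Rightarrow> bool) \<Rightarrow> nat" where
  "gamma_DLD V E = Min (card ` {C. solid_ld V E C})"

definition cart_edge :: "('a \<Rightarrow> 'a \<Rightarrow> bool) \<Rightarrow> ('b \<Rightarrow> 'b \<Rightarrow> bool) \<Rightarrow> 'a \<times> 'b \<Rightarrow> 'a \<times> 'b \<Rightarrow> bool" where
  "cart_edge E1 E2 p q \<longleftrightarrow>
     (fst p = fst q \<and> E2 (snd p) (snd q)) \<or> (E1 (fst p) (fst q) \<and> snd p = snd q)"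

end

theory Submission
  imports Defs
begin

text \<open>Both bounds come from transporting codes between \<open>G\<close> and \<open>G \<box> H\<close>.
If \<open>C\<close> is a code of \<open>G\<close>, then \<open>C \<times> V(H)\<close> is a code of the same kind in
\<open>G \<box> H\<close>: a non-codeword \<open>(u,v)\<close> sees exactly \<open>I(C;u) \<times> {v}\<close>.  Conversely,
if \<open>D\<close> is a code of \<open>G \<box> H\<close>, its projection to the first factor is a code
of \<open>G\<close>: for \<open>u\<close> outside the projection and any \<open>v\<close>, the codewords seen by
\<open>(u,v)\<close> all lie in the \<open>G\<close>-layer through \<open>v\<close>.  The bounds for \<open>H\<close> follow
because \<open>G \<box> H\<close> and \<open>H \<box> G\<close> are isomorphic via swapping coordinates.\<close>

lemma mem_cnbhd_self: "u \<in> cnbhd V E u"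
  by (simp add: cnbhd_def)

lemma cnbhd_subset: "u \<in> V \<Longrightarrow> cnbhd V E u \<subseteq> V"
  by (auto simp: cnbhd_def)

lemma cnbhd_sym: "fin_graph V E \<Longrightarrow> u \<in> V \<Longrightarrow> c \<in> cnbhd V E u \<Longrightarrow> u \<in> cnbhd V E c"
  by (auto simp: cnbhd_def fin_graph_def)

lemma cnbhd_cart:
  assumes "fin_graph VG EG" "fin_graph VH EH" "u \<in> VG" "v \<in> VH"
  shows "cnbhd (VG \<times> VH) (cart_edge EG EH) (u, v) =
           cnbhd VG EG u \<times> {v} \<union> {u} \<times> cnbhd VH EH v"
  using assms unfolding cnbhd_def cart_edge_def fin_graph_def by auto

lemma cnbhd_cart_swap:
  "cnbhd (VH \<times> VG) (cart_edge EH EG) (prod.swap p) =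
     prod.swap ` cnbhd (VG \<times> VH) (cart_edge EG EH) p"
  by (auto simp: cnbhd_def cart_edge_def image_iff)

lemma self_ld_vertex_set: "V \<noteq> {} \<Longrightarrow> self_ld V E V"
  by (simp add: self_ld_def)

lemma solid_ld_vertex_set: "V \<noteq> {} \<Longrightarrow> solid_ld V E V"
  by (simp add: solid_ld_def)

lemma Min_card_le:
  assumes "finite V" "\<And>C. P C \<Longrightarrow> C \<subseteq> V" "P C"
  shows "Min (card ` {C. P C}) \<le> card C"
proof -
  have "finite {C. P C}"
    using assms(1,2) by (blast intro: finite_subset[of _ "Pow V"])
  then show ?thesis
    using assms(3) by (intro Min_le) auto
qed

lemma Min_card_attained:
  assumes "finite V" "\<And>C. P C \<Longrightarrow> C \<subseteq> V" "P C"
  shows "\<exists>D. P D \<and> card D = Min (card ` {C. P C})"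
proof -
  have "finite {C. P C}"
    using assms(1,2) by (blast intro: finite_subset[of _ "Pow V"])
  then have "Min (card ` {C. P C}) \<in> card ` {C. P C}"
    using assms(3) by (intro Min_in) auto
  then show ?thesis
    by force
qed

lemma gamma_SLD_le: "finite V \<Longrightarrow> self_ld V E C \<Longrightarrow> gamma_SLD V E \<le> card C"
  unfolding gamma_SLD_def by (rule Min_card_le) (auto simp: self_ld_def)

lemma gamma_SLD_attained:
  "finite V \<Longrightarrow> V \<noteq> {} \<Longrightarrow> \<exists>C. self_ld V E C \<and> card C = gamma_SLD V E"
  unfolding gamma_SLD_def
  by (rule Min_card_attained) (auto simp: self_ld_def intro: self_ld_vertex_set)

lemma gamma_DLD_le: "finite V \<Longrightarrow> solid_ld V E C \<Longrightarrow> gamma_DLD V E \<le> card C"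
  unfolding gamma_DLD_def by (rule Min_card_le) (auto simp: solid_ld_def)

lemma gamma_DLD_attained:
  "finite V \<Longrightarrow> V \<noteq> {} \<Longrightarrow> \<exists>C. solid_ld V E C \<and> card C = gamma_DLD V E"
  unfolding gamma_DLD_def
  by (rule Min_card_attained) (auto simp: solid_ld_def intro: solid_ld_vertex_set)

subsection \<open>Invariance under isomorphism\<close>

lemma Ic_image:
  assumes "inj_on f V" "C \<subseteq> V" "u \<in> V" "cnbhd V' E' (f u) = f ` cnbhd V E u"
  shows "Ic V' E' (f ` C) (f u) = f ` Ic V E C u"
  using assms cnbhd_subset[of u V E] by (simp add: Ic_def inj_on_image_Int)

lemma self_ld_image:
  assumes inj: "inj_on f V" and V': "V' = f ` V"
    and nbhd: "\<And>u. u \<in> V \<Longrightarrow> cnbhd V' E' (f u) = f ` cnbhd V E u"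
    and C: "self_ld V E C"
  shows "self_ld V' E' (f ` C)"
  unfolding self_ld_def
proof (intro conjI ballI)
  have CV: "C \<subseteq> V"
    using C by (simp add: self_ld_def)
  show "f ` C \<subseteq> V'" "f ` C \<noteq> {}"
    using C V' by (auto simp: self_ld_def)
  fix w assume "w \<in> V' - f ` C"
  then obtain u where u: "u \<in> V - C" and w: "w = f u"
    using V' by auto
  have I: "Ic V' E' (f ` C) w = f ` Ic V E C u"
    using Ic_image[OF inj CV _ nbhd] u w by simp
  have Iu: "Ic V E C u \<noteq> {}" "(\<Inter>c \<in> Ic V E C u. cnbhd V E c) = {u}"
    using C u by (auto simp: self_ld_def)
  then show "Ic V' E' (f ` C) w \<noteq> {}"
    using I by simp
  have ICV: "Ic V E C u \<subseteq> V"
    using CV by (auto simp: Ic_def)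
  have "(\<Inter>c' \<in> Ic V' E' (f ` C) w. cnbhd V' E' c') = (\<Inter>c \<in> Ic V E C u. cnbhd V' E' (f c))"
    by (simp add: I)
  also have "\<dots> = (\<Inter>c \<in> Ic V E C u. f ` cnbhd V E c)"
    using ICV nbhd by (intro INF_cong refl) auto
  also have "\<dots> = f ` (\<Inter>c \<in> Ic V E C u. cnbhd V E c)"
  proof -
    obtain c where "c \<in> Ic V E C u"
      using Iu(1) by blast
    then show ?thesis
      using ICV cnbhd_subset[of _ V E] by (intro image_INT[symmetric, OF inj]) auto
  qed
  finally show "(\<Inter>c' \<in> Ic V' E' (f ` C) w. cnbhd V' E' c') = {w}"
    using Iu(2) w by simp
qed

lemma solid_ld_image:
  assumes inj: "inj_on f V" and V': "V' = f ` V"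
    and nbhd: "\<And>u. u \<in> V \<Longrightarrow> cnbhd V' E' (f u) = f ` cnbhd V E u"
    and C: "solid_ld V E C"
  shows "solid_ld V' E' (f ` C)"
  unfolding solid_ld_def
proof (intro conjI ballI impI)
  have CV: "C \<subseteq> V"
    using C by (simp add: solid_ld_def)
  have I: "Ic V' E' (f ` C) (f u) = f ` Ic V E C u" if "u \<in> V" for u
    using Ic_image[OF inj CV that nbhd[OF that]] .
  show "f ` C \<subseteq> V'" "f ` C \<noteq> {}"
    using C V' by (auto simp: solid_ld_def)
  fix w assume "w \<in> V' - f ` C"
  then obtain u where u: "u \<in> V - C" and w: "w = f u"
    using V' by auto
  show "Ic V' E' (f ` C) w \<noteq> {}"
    using C u I[of u] w by (auto simp: solid_ld_def)
  fix w' assume "w' \<in> V' - f ` C" "w \<noteq> w'"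
  then obtain u' where u': "u' \<in> V - C" and w': "w' = f u'" and "u \<noteq> u'"
    using V' w by auto
  then have "\<not> Ic V E C u \<subseteq> Ic V E C u'"
    using C u by (auto simp: solid_ld_def)
  moreover have "Ic V E C u \<subseteq> V" "Ic V E C u' \<subseteq> V"
    using CV by (auto simp: Ic_def)
  moreover have "f ` A \<subseteq> f ` B \<Longrightarrow> A \<subseteq> B" if "A \<subseteq> V" "B \<subseteq> V" for A B
    using inj that unfolding inj_on_def by blast
  ultimately show "\<not> Ic V' E' (f ` C) w \<subseteq> Ic V' E' (f ` C) w'"
    using I u u' w w' by (metis DiffD1)
qed

lemma gamma_SLD_cart_swap_le:
  assumes "fin_graph VG EG" "fin_graph VH EH"
  shows "gamma_SLD (VH \<times> VG) (cart_edge EH EG) \<le> gamma_SLD (VG \<times> VH) (cart_edge EG EH)"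
proof -
  have "finite (VG \<times> VH)" "VG \<times> VH \<noteq> {}"
    using assms by (auto simp: fin_graph_def)
  then obtain D where D: "self_ld (VG \<times> VH) (cart_edge EG EH) D"
    and card_D: "card D = gamma_SLD (VG \<times> VH) (cart_edge EG EH)"
    using gamma_SLD_attained by blast
  have "self_ld (VH \<times> VG) (cart_edge EH EG) (prod.swap ` D)"
    by (rule self_ld_image[OF _ _ _ D]) (simp_all add: product_swap cnbhd_cart_swap)
  then have "gamma_SLD (VH \<times> VG) (cart_edge EH EG) \<le> card (prod.swap ` D)"
    using assms by (intro gamma_SLD_le) (auto simp: fin_graph_def)
  then show ?thesis
    by (simp add: card_image card_D)
qed

lemma gamma_SLD_cart_swap:
  assumes "fin_graph VG EG" "fin_graph VH EH"
  shows "gamma_SLD (VH \<times> VG) (cart_edge EH EG) = gamma_SLD (VG \<times> VH) (cart_edge EG EH)"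
  using gamma_SLD_cart_swap_le[OF assms] gamma_SLD_cart_swap_le[OF assms(2,1)] by (rule antisym)

lemma gamma_DLD_cart_swap_le:
  assumes "fin_graph VG EG" "fin_graph VH EH"
  shows "gamma_DLD (VH \<times> VG) (cart_edge EH EG) \<le> gamma_DLD (VG \<times> VH) (cart_edge EG EH)"
proof -
  have "finite (VG \<times> VH)" "VG \<times> VH \<noteq> {}"
    using assms by (auto simp: fin_graph_def)
  then obtain D where D: "solid_ld (VG \<times> VH) (cart_edge EG EH) D"
    and card_D: "card D = gamma_DLD (VG \<times> VH) (cart_edge EG EH)"
    using gamma_DLD_attained by blast
  have "solid_ld (VH \<times> VG) (cart_edge EH EG) (prod.swap ` D)"
    by (rule solid_ld_image[OF _ _ _ D]) (simp_all add: product_swap cnbhd_cart_swap)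
  then have "gamma_DLD (VH \<times> VG) (cart_edge EH EG) \<le> card (prod.swap ` D)"
    using assms by (intro gamma_DLD_le) (auto simp: fin_graph_def)
  then show ?thesis
    by (simp add: card_image card_D)
qed

lemma gamma_DLD_cart_swap:
  assumes "fin_graph VG EG" "fin_graph VH EH"
  shows "gamma_DLD (VH \<times> VG) (cart_edge EH EG) = gamma_DLD (VG \<times> VH) (cart_edge EG EH)"
  using gamma_DLD_cart_swap_le[OF assms] gamma_DLD_cart_swap_le[OF assms(2,1)] by (rule antisym)

subsection \<open>Codes of the form \<open>C \<times> V(H)\<close>\<close>

lemma self_ld_two_codewords:
  assumes C: "self_ld V E C" and u: "u \<in> V - C"
  shows "\<exists>c \<in> Ic V E C u. \<exists>c' \<in> Ic V E C u. c \<noteq> c'"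
proof (rule ccontr)
  assume single: "\<not> ?thesis"
  have "Ic V E C u \<noteq> {}"
    using C u by (simp add: self_ld_def)
  then obtain c where c: "c \<in> Ic V E C u"
    by blast
  then have "Ic V E C u = {c}"
    using single by blast
  moreover have "(\<Inter>c \<in> Ic V E C u. cnbhd V E c) = {u}"
    using C u by (simp add: self_ld_def)
  ultimately have "cnbhd V E c = {u}"
    by simp
  then have "c = u"
    using mem_cnbhd_self[of c V E] by blast
  with c u show False
    by (simp add: Ic_def)
qed

lemma Ic_cart_times:
  assumes "fin_graph VG EG" "fin_graph VH EH" "u \<in> VG - C" "v \<in> VH"
  shows "Ic (VG \<times> VH) (cart_edge EG EH) (C \<times> VH) (u, v) = Ic VG EG C u \<times> {v}"
  using assms by (auto simp: Ic_def cnbhd_cart)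

lemma Inter_cnbhd_cart_layer:
  assumes G: "fin_graph VG EG" and H: "fin_graph VH EH"
    and I: "I \<subseteq> VG" and v: "v \<in> VH" and two: "c1 \<in> I" "c2 \<in> I" "c1 \<noteq> c2"
  shows "(\<Inter>p \<in> I \<times> {v}. cnbhd (VG \<times> VH) (cart_edge EG EH) p) = (\<Inter>c \<in> I. cnbhd VG EG c) \<times> {v}"
proof (intro set_eqI iffI)
  fix q assume "q \<in> (\<Inter>p \<in> I \<times> {v}. cnbhd (VG \<times> VH) (cart_edge EG EH) p)"
  moreover obtain x y where xy: "q = (x, y)"
    by (cases q)
  ultimately have q: "(x, y) \<in> cnbhd VG EG c \<times> {v} \<union> {c} \<times> cnbhd VH EH v" if "c \<in> I" for c
    using that I cnbhd_cart[OF G H _ v, of c] by blast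
  have "y = v"
    using q[OF two(1)] q[OF two(2)] two(3) by blast
  moreover have "x \<in> cnbhd VG EG c" if "c \<in> I" for c
    using q[OF that] mem_cnbhd_self[of c VG EG] by blast
  ultimately show "q \<in> (\<Inter>c \<in> I. cnbhd VG EG c) \<times> {v}"
    using xy by blast
next
  fix q assume "q \<in> (\<Inter>c \<in> I. cnbhd VG EG c) \<times> {v}"
  then show "q \<in> (\<Inter>p \<in> I \<times> {v}. cnbhd (VG \<times> VH) (cart_edge EG EH) p)"
    using I cnbhd_cart[OF G H _ v] by auto
qed

lemma self_ld_cart_times:
  assumes G: "fin_graph VG EG" and H: "fin_graph VH EH" and C: "self_ld VG EG C"
  shows "self_ld (VG \<times> VH) (cart_edge EG EH) (C \<times> VH)"
  unfolding self_ld_def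
proof (intro conjI ballI)
  show "C \<times> VH \<subseteq> VG \<times> VH" "C \<times> VH \<noteq> {}"
    using C H by (auto simp: self_ld_def fin_graph_def)
  fix p assume "p \<in> VG \<times> VH - C \<times> VH"
  then obtain u v where p: "p = (u, v)" and u: "u \<in> VG - C" and v: "v \<in> VH"
    by auto
  have I: "Ic (VG \<times> VH) (cart_edge EG EH) (C \<times> VH) p = Ic VG EG C u \<times> {v}"
    using Ic_cart_times[OF G H u v] p by simp
  have Iu: "Ic VG EG C u \<noteq> {}" "(\<Inter>c \<in> Ic VG EG C u. cnbhd VG EG c) = {u}"
    using C u by (auto simp: self_ld_def)
  then show "Ic (VG \<times> VH) (cart_edge EG EH) (C \<times> VH) p \<noteq> {}"
    using I by simp
  have IV: "Ic VG EG C u \<subseteq> VG"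
    using C by (auto simp: self_ld_def Ic_def)
  obtain c1 c2 where "c1 \<in> Ic VG EG C u" "c2 \<in> Ic VG EG C u" "c1 \<noteq> c2"
    using self_ld_two_codewords[OF C u] by blast
  then show "(\<Inter>q \<in> Ic (VG \<times> VH) (cart_edge EG EH) (C \<times> VH) p. cnbhd (VG \<times> VH) (cart_edge EG EH) q) = {p}"
    using Inter_cnbhd_cart_layer[OF G H IV v] Iu(2) I p by simp
qed

lemma solid_ld_cart_times:
  assumes G: "fin_graph VG EG" and H: "fin_graph VH EH" and C: "solid_ld VG EG C"
  shows "solid_ld (VG \<times> VH) (cart_edge EG EH) (C \<times> VH)"
  unfolding solid_ld_def
proof (intro conjI ballI impI)
  show "C \<times> VH \<subseteq> VG \<times> VH" "C \<times> VH \<noteq> {}"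
    using C H by (auto simp: solid_ld_def fin_graph_def)
  fix p assume "p \<in> VG \<times> VH - C \<times> VH"
  then obtain u v where p: "p = (u, v)" and u: "u \<in> VG - C" and v: "v \<in> VH"
    by auto
  have Iu: "Ic VG EG C u \<noteq> {}"
    using C u by (auto simp: solid_ld_def)
  then show "Ic (VG \<times> VH) (cart_edge EG EH) (C \<times> VH) p \<noteq> {}"
    using Ic_cart_times[OF G H u v] p by simp
  fix q assume "q \<in> VG \<times> VH - C \<times> VH" and pq: "p \<noteq> q"
  then obtain w y where q: "q = (w, y)" and w: "w \<in> VG - C" and y: "y \<in> VH"
    by auto
  have "\<not> Ic VG EG C u \<times> {v} \<subseteq> Ic VG EG C w \<times> {y}"
  proof (cases "v = y")
    case True
    then have "\<not> Ic VG EG C u \<subseteq> Ic VG EG C w"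
      using C u w pq p q by (auto simp: solid_ld_def)
    then show ?thesis
      using True by auto
  qed (use Iu in auto)
  then show "\<not> Ic (VG \<times> VH) (cart_edge EG EH) (C \<times> VH) p \<subseteq> Ic (VG \<times> VH) (cart_edge EG EH) (C \<times> VH) q"
    using Ic_cart_times[OF G H u v] Ic_cart_times[OF G H w y] p q by simp
qed

subsection \<open>Projections of codes of the product\<close>

lemma mem_fst_image: "(a, b) \<in> A \<Longrightarrow> a \<in> fst ` A"
  by force

lemma Ic_cart_outside_fst_image:
  assumes "fin_graph VG EG" "fin_graph VH EH" "D \<subseteq> VG \<times> VH" "u \<in> VG - fst ` D" "v \<in> VH"
  shows "Ic (VG \<times> VH) (cart_edge EG EH) D (u, v) = (cnbhd VG EG u \<times> {v}) \<inter> D"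
  using assms by (auto simp: Ic_def cnbhd_cart image_iff)

lemma self_ld_fst_image:
  assumes G: "fin_graph VG EG" and H: "fin_graph VH EH"
    and D: "self_ld (VG \<times> VH) (cart_edge EG EH) D"
  shows "self_ld VG EG (fst ` D)"
  unfolding self_ld_def
proof (intro conjI ballI)
  have DV: "D \<subseteq> VG \<times> VH"
    using D by (simp add: self_ld_def)
  show "fst ` D \<subseteq> VG" "fst ` D \<noteq> {}"
    using D by (auto simp: self_ld_def)
  obtain v where v: "v \<in> VH"
    using H by (auto simp: fin_graph_def)
  fix u assume u: "u \<in> VG - fst ` D"
  let ?S = "Ic (VG \<times> VH) (cart_edge EG EH) D (u, v)"
  have S: "?S = (cnbhd VG EG u \<times> {v}) \<inter> D"
    by (rule Ic_cart_outside_fst_image[OF G H DV u v])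
  have "(u, v) \<in> VG \<times> VH - D"
    using u v by force
  then have Sp: "?S \<noteq> {}" "(\<Inter>p \<in> ?S. cnbhd (VG \<times> VH) (cart_edge EG EH) p) = {(u, v)}"
    using D by (auto simp: self_ld_def)
  have Ic_fst: "c \<in> Ic VG EG (fst ` D) u" if "(c, v) \<in> ?S" for c
    using that S mem_fst_image[of c v D] by (auto simp: Ic_def)
  have S_layer: "\<exists>c. p = (c, v)" if "p \<in> ?S" for p
    using that S by auto
  show "Ic VG EG (fst ` D) u \<noteq> {}"
    using Sp(1) Ic_fst S_layer by blast
  show "(\<Inter>c \<in> Ic VG EG (fst ` D) u. cnbhd VG EG c) = {u}"
  proof (intro equalityI subsetI)
    fix x assume x: "x \<in> (\<Inter>c \<in> Ic VG EG (fst ` D) u. cnbhd VG EG c)"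
    have "(x, v) \<in> cnbhd (VG \<times> VH) (cart_edge EG EH) p" if pS: "p \<in> ?S" for p
    proof -
      obtain c where p: "p = (c, v)" and c: "c \<in> Ic VG EG (fst ` D) u"
        using S_layer[OF pS] Ic_fst pS by blast
      have "c \<in> VG"
        using c DV by (auto simp: Ic_def)
      moreover have "x \<in> cnbhd VG EG c"
        using x c by blast
      ultimately show ?thesis
        by (simp add: p cnbhd_cart[OF G H _ v])
    qed
    then show "x \<in> {u}"
      using Sp(2) by blast
  next
    fix x assume "x \<in> {u}"
    then show "x \<in> (\<Inter>c \<in> Ic VG EG (fst ` D) u. cnbhd VG EG c)"
      using cnbhd_sym[OF G] u by (auto simp: Ic_def)
  qed
qed

lemma solid_ld_fst_image:
  assumes G: "fin_graph VG EG" and H: "fin_graph VH EH"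
    and D: "solid_ld (VG \<times> VH) (cart_edge EG EH) D"
  shows "solid_ld VG EG (fst ` D)"
  unfolding solid_ld_def
proof (intro conjI ballI impI)
  have DV: "D \<subseteq> VG \<times> VH"
    using D by (simp add: solid_ld_def)
  show "fst ` D \<subseteq> VG" "fst ` D \<noteq> {}"
    using D by (auto simp: solid_ld_def)
  obtain v where v: "v \<in> VH"
    using H by (auto simp: fin_graph_def)
  have S: "Ic (VG \<times> VH) (cart_edge EG EH) D (u, v) = (cnbhd VG EG u \<times> {v}) \<inter> D"
    if "u \<in> VG - fst ` D" for u
    using Ic_cart_outside_fst_image[OF G H DV that v] .
  have uv: "(u, v) \<in> VG \<times> VH - D" if "u \<in> VG - fst ` D" for u
    using that v by force
  fix u assume u: "u \<in> VG - fst ` D"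
  have "Ic (VG \<times> VH) (cart_edge EG EH) D (u, v) \<noteq> {}"
    using D uv[OF u] by (simp add: solid_ld_def)
  then obtain p where "p \<in> Ic (VG \<times> VH) (cart_edge EG EH) D (u, v)"
    by blast
  then obtain c where "c \<in> cnbhd VG EG u" "(c, v) \<in> D"
    using S[OF u] by auto
  then show "Ic VG EG (fst ` D) u \<noteq> {}"
    using mem_fst_image[of c v D] by (auto simp: Ic_def)
  fix w assume w: "w \<in> VG - fst ` D" and "u \<noteq> w"
  then have "\<not> Ic (VG \<times> VH) (cart_edge EG EH) D (u, v) \<subseteq> Ic (VG \<times> VH) (cart_edge EG EH) D (w, v)"
    using D uv[OF u] uv[OF w] by (auto simp: solid_ld_def)
  then obtain c where "c \<in> cnbhd VG EG u" "(c, v) \<in> D" "c \<notin> cnbhd VG EG w"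
    using S[OF u] S[OF w] by auto
  then show "\<not> Ic VG EG (fst ` D) u \<subseteq> Ic VG EG (fst ` D) w"
    using mem_fst_image[of c v D] by (auto simp: Ic_def)
qed

lemma gamma_SLD_le_cart:
  assumes G: "fin_graph VG EG" and H: "fin_graph VH EH"
  shows "gamma_SLD VG EG \<le> gamma_SLD (VG \<times> VH) (cart_edge EG EH)"
proof -
  have "finite (VG \<times> VH)" "VG \<times> VH \<noteq> {}"
    using G H by (auto simp: fin_graph_def)
  then obtain D where D: "self_ld (VG \<times> VH) (cart_edge EG EH) D"
    and card_D: "card D = gamma_SLD (VG \<times> VH) (cart_edge EG EH)"
    using gamma_SLD_attained by blast
  have "finite D"
    using D by (intro finite_subset[OF _ \<open>finite (VG \<times> VH)\<close>]) (simp add: self_ld_def)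
  have "gamma_SLD VG EG \<le> card (fst ` D)"
    using G self_ld_fst_image[OF G H D] by (intro gamma_SLD_le) (auto simp: fin_graph_def)
  also have "\<dots> \<le> card D"
    using \<open>finite D\<close> by (rule card_image_le)
  finally show ?thesis
    using card_D by simp
qed

lemma gamma_SLD_cart_le:
  assumes G: "fin_graph VG EG" and H: "fin_graph VH EH"
  shows "gamma_SLD (VG \<times> VH) (cart_edge EG EH) \<le> card VH * gamma_SLD VG EG"
proof -
  have "finite VG" "VG \<noteq> {}"
    using G by (auto simp: fin_graph_def)
  then obtain C where C: "self_ld VG EG C" and card_C: "card C = gamma_SLD VG EG"
    using gamma_SLD_attained by blast
  have "gamma_SLD (VG \<times> VH) (cart_edge EG EH) \<le> card (C \<times> VH)"
    using G H self_ld_cart_times[OF G H C] by (intro gamma_SLD_le) (auto simp: fin_graph_def)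
  then show ?thesis
    by (simp add: card_cartesian_product card_C mult.commute)
qed

lemma gamma_DLD_le_cart:
  assumes G: "fin_graph VG EG" and H: "fin_graph VH EH"
  shows "gamma_DLD VG EG \<le> gamma_DLD (VG \<times> VH) (cart_edge EG EH)"
proof -
  have "finite (VG \<times> VH)" "VG \<times> VH \<noteq> {}"
    using G H by (auto simp: fin_graph_def)
  then obtain D where D: "solid_ld (VG \<times> VH) (cart_edge EG EH) D"
    and card_D: "card D = gamma_DLD (VG \<times> VH) (cart_edge EG EH)"
    using gamma_DLD_attained by blast
  have "finite D"
    using D by (intro finite_subset[OF _ \<open>finite (VG \<times> VH)\<close>]) (simp add: solid_ld_def)
  have "gamma_DLD VG EG \<le> card (fst ` D)"
    using G solid_ld_fst_image[OF G H D] by (intro gamma_DLD_le) (auto simp: fin_graph_def)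
  also have "\<dots> \<le> card D"
    using \<open>finite D\<close> by (rule card_image_le)
  finally show ?thesis
    using card_D by simp
qed

lemma gamma_DLD_cart_le:
  assumes G: "fin_graph VG EG" and H: "fin_graph VH EH"
  shows "gamma_DLD (VG \<times> VH) (cart_edge EG EH) \<le> card VH * gamma_DLD VG EG"
proof -
  have "finite VG" "VG \<noteq> {}"
    using G by (auto simp: fin_graph_def)
  then obtain C where C: "solid_ld VG EG C" and card_C: "card C = gamma_DLD VG EG"
    using gamma_DLD_attained by blast
  have "gamma_DLD (VG \<times> VH) (cart_edge EG EH) \<le> card (C \<times> VH)"
    using G H solid_ld_cart_times[OF G H C] by (intro gamma_DLD_le) (auto simp: fin_graph_def)
  then show ?thesis
    by (simp add: card_cartesian_product card_C mult.commute)
qed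

theorem mainTheorem14:
  fixes VG :: "'a set" and EG :: "'a \<Rightarrow> 'a \<Rightarrow> bool"
    and VH :: "'b set" and EH :: "'b \<Rightarrow> 'b \<Rightarrow> bool"
  assumes "fin_graph VG EG" and "fin_graph VH EH"
  shows "(max (gamma_SLD VG EG) (gamma_SLD VH EH) \<le> gamma_SLD (VG \<times> VH) (cart_edge EG EH) \<and>
         gamma_SLD (VG \<times> VH) (cart_edge EG EH)
           \<le> min (card VH * gamma_SLD VG EG) (card VG * gamma_SLD VH EH)) \<and>
         (max (gamma_DLD VG EG) (gamma_DLD VH EH) \<le> gamma_DLD (VG \<times> VH) (cart_edge EG EH) \<and>
         gamma_DLD (VG \<times> VH) (cart_edge EG EH)
           \<le> min (card VH * gamma_DLD VG EG) (card VG * gamma_DLD VH EH))"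
  using gamma_SLD_le_cart[OF assms] gamma_SLD_le_cart[OF assms(2,1)]
    gamma_SLD_cart_le[OF assms] gamma_SLD_cart_le[OF assms(2,1)]
    gamma_DLD_le_cart[OF assms] gamma_DLD_le_cart[OF assms(2,1)]
    gamma_DLD_cart_le[OF assms] gamma_DLD_cart_le[OF assms(2,1)]
  unfolding gamma_SLD_cart_swap[OF assms] gamma_DLD_cart_swap[OF assms] by simp

end
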